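(* Assume the Standing Assumption and fix $T>0$. Let $(\tau_l)_l\subseteq(0,\infty)$ with $\tau_l\to0$, and suppose that the piecewise constant velocity fields $\tilde v_{\tau_l}\in L_2(\tilde\gamma_{\tau_l};\mathbb{R}^d\times[0,T])$ converge weakly to some $\hat v\in L_2(\hat\gamma;\mathbb{R}^d\times[0,T])$, where $\hat\gamma$ is a curve in $\mathcal P_2(\mathbb{R}^d)$, i.e. $\int_0^T\int_{\mathbb{R}^d}\langle\phi(x,t),\tilde v_{\tau_l}(x,t)\rangle\,d\tilde\gamma_{\tau_l}(t)(x)\,dt\to\int_0^T\int_{\mathbb{R}^d}\langle\phi(x,t),\hat v(x,t)\rangle\,d\hat\gamma(t)(x)\,dt$ for all $\phi\in C_c^\infty(\mathbb{R}^d\times[0,T];\mathbb{R}^d)$. Then also $\int_0^T\int_{\mathbb{R}^d}\langle\phi(x,t),v_{\tau_l}(x,t)\rangle\,d\gamma_{\tau_l}(t)(x)\,dt\to\int_0^T\int_{\mathbb{R}^d}\langle\phi(x,t),\hat v(x,t)\rangle\,d\hat\gamma(t)(x)\,dt$ for all such $\phi$, i.e. $v_{\tau_l}$ converges weakly to $\hat v$.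
   Context: $\mathcal P_2(\mathbb{R}^d)$ is the set of Borel probability measures on $\mathbb{R}^d$ with finite second moment, equipped with the Wasserstein-2 distance $W_2$; $\mathcal P_2^{ac}(\mathbb{R}^d)$ is the subset of absolutely continuous measures. The metric slope is $|\partial\mathcal F|(\mu)=\limsup_{\nu\to\mu}\frac{(\mathcal F(\mu)-\mathcal F(\nu))^+}{W_2(\mu,\nu)}$. Standing Assumption: $\mathcal F:\mathcal P_2(\mathbb{R}^d)\to\mathbb{R}\cup\{+\infty\}$ is proper, lower semicontinuous with respect to narrow convergence, coercive, $\lambda$-convex along generalized geodesics (in the sense of Ambrosio–Gigli–Savaré, Def. 9.2.4) for some $\lambda\in\mathbb{R}$, and bounded from below; moreover $\mathrm{dom}(|\partial\mathcal F|)\subseteq\mathcal P_2^{ac}(\mathbb{R}^d)$, and the initial measure $\mu^0\in\mathcal P_2^{ac}(\mathbb{R}^d)$ satisfies $|\partial\mathcal F|(\mu^0)<\infty$. JKO scheme: $\mathrm{prox}_{\tau\mathcal F}(\hat\mu)=\operatorname{argmin}_{\mu}\{\tfrac12W_2^2(\mu,\hat\mu)+\tau\mathcal F(\mu)\}$; $\mu_\tau^0=\mu^0$, $\mu_\tau^{k+1}=\mathrm{prox}_{\tau\mathcal F}(\mu_\tau^k)$. Let $\mathcal T_\tau^k$ be the optimal transport map from $\mu_\tau^k$ to $\mu_\tau^{k+1}$ and $v_\tau^k=(\mathcal T_\tau^k-\mathrm{Id})/\tau$. Piecewise constant interpolation: $\tilde\gamma_\tau(k\tau+t\tau)=\mu_\tau^k$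 and $\tilde v_\tau(x,k\tau+t\tau)=v_\tau^k(x)$ for $t\in[0,1)$. Piecewise geodesic interpolation: $\gamma_\tau(k\tau+t\tau)=((1-t)\mathrm{Id}+t\mathcal T_\tau^k)_\#\mu_\tau^k$ and $v_\tau(x,k\tau+t\tau)=v_\tau^k\big(((1-t)\mathrm{Id}+t\mathcal T_\tau^k)^{-1}(x)\big)$ for $t\in[0,1]$. For a curve $\beta$, $L_2(\beta;\mathbb{R}^d\times[0,T])$ denotes square-integrable vector fields with respect to $\beta(t)\,dt$. *)

theory Defs
  imports "HOL-Probability.Probability"
begin

text \<open>R^d is modelled by an arbitrary Euclidean space 'a; Borel probability measures
  with finite second moment.\<close>

definition P2 :: "'a::euclidean_space measure \<Rightarrow> bool" where
  "P2 \<mu> \<longleftrightarrow> prob_space \<mu> \<and> sets \<mu> = sets borel \<and>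
     (\<integral>\<^sup>+ x. ennreal ((norm x)\<^sup>2) \<partial>\<mu>) < \<infinity>"

definition P2ac :: "'a::euclidean_space measure \<Rightarrow> bool" where
  "P2ac \<mu> \<longleftrightarrow> P2 \<mu> \<and> absolutely_continuous lborel \<mu>"

definition couplings :: "'a::euclidean_space measure \<Rightarrow> 'a measure \<Rightarrow> ('a \<times> 'a) measure set" where
  "couplings \<mu> \<nu> = {\<pi>. prob_space \<pi> \<and> sets \<pi> = sets borel \<and>
      distr \<pi> borel fst = \<mu> \<and> distr \<pi> borel snd = \<nu>}"

definition transport_cost :: "('a::euclidean_space \<times> 'a) measure \<Rightarrow> ennreal" where
  "transport_cost \<pi> = (\<integral>\<^sup>+ p. ennreal ((dist (fst p) (snd p))\<^sup>2) \<partial>\<pi>)"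

definition W2sq :: "'a::euclidean_space measure \<Rightarrow> 'a measure \<Rightarrow> ennreal" where
  "W2sq \<mu> \<nu> = (INF \<pi>\<in>couplings \<mu> \<nu>. transport_cost \<pi>)"

definition W2 :: "'a::euclidean_space measure \<Rightarrow> 'a measure \<Rightarrow> real" where
  "W2 \<mu> \<nu> = sqrt (enn2real (W2sq \<mu> \<nu>))"

definition optimal_coupling :: "'a::euclidean_space measure \<Rightarrow> 'a measure \<Rightarrow> ('a \<times> 'a) measure \<Rightarrow> bool" where
  "optimal_coupling \<mu> \<nu> \<pi> \<longleftrightarrow> \<pi> \<in> couplings \<mu> \<nu> \<and> transport_cost \<pi> = W2sq \<mu> \<nu>"

definition optimal_map :: "'a::euclidean_space measure \<Rightarrow> 'a measure \<Rightarrow> ('a \<Rightarrow> 'a) \<Rightarrow> bool" where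
  "optimal_map \<mu> \<nu> T \<longleftrightarrow> T \<in> borel_measurable borel \<and> distr \<mu> borel T = \<nu> \<and>
      (\<integral>\<^sup>+ x. ennreal ((dist (T x) x)\<^sup>2) \<partial>\<mu>) = W2sq \<mu> \<nu>"

definition narrow_conv :: "(nat \<Rightarrow> 'a::euclidean_space measure) \<Rightarrow> 'a measure \<Rightarrow> bool" where
  "narrow_conv \<mu>s \<mu> \<longleftrightarrow> (\<forall>f::'a \<Rightarrow> real. continuous_on UNIV f \<and> bounded (range f) \<longrightarrow>
      (\<lambda>n. \<integral>x. f x \<partial>(\<mu>s n)) \<longlonglongrightarrow> (\<integral>x. f x \<partial>\<mu>))"

definition dom_F :: "('a::euclidean_space measure \<Rightarrow> ereal) \<Rightarrow> 'a measure set" where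
  "dom_F F = {\<mu>. P2 \<mu> \<and> F \<mu> < \<infinity>}"

definition proper_fun :: "('a::euclidean_space measure \<Rightarrow> ereal) \<Rightarrow> bool" where
  "proper_fun F \<longleftrightarrow> (\<forall>\<mu>. P2 \<mu> \<longrightarrow> F \<mu> \<noteq> -\<infinity>) \<and> (\<exists>\<mu>. P2 \<mu> \<and> F \<mu> < \<infinity>)"

definition narrow_lsc :: "('a::euclidean_space measure \<Rightarrow> ereal) \<Rightarrow> bool" where
  "narrow_lsc F \<longleftrightarrow> (\<forall>\<mu>s \<mu>. (\<forall>n. P2 (\<mu>s n)) \<and> P2 \<mu> \<and> narrow_conv \<mu>s \<mu> \<longrightarrow>
      F \<mu> \<le> liminf (\<lambda>n. F (\<mu>s n)))"

definition coercive :: "('a::euclidean_space measure \<Rightarrow> ereal) \<Rightarrow> bool" where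
  "coercive F \<longleftrightarrow> (\<exists>\<tau>s>0. \<exists>\<mu>s. P2 \<mu>s \<and>
      (INF \<nu>\<in>{\<nu>. P2 \<nu>}. F \<nu> + ereal ((W2 \<nu> \<mu>s)\<^sup>2 / (2 * \<tau>s))) > -\<infinity>)"

definition bounded_below :: "('a::euclidean_space measure \<Rightarrow> ereal) \<Rightarrow> bool" where
  "bounded_below F \<longleftrightarrow> (\<exists>c::real. \<forall>\<mu>. P2 \<mu> \<longrightarrow> ereal c \<le> F \<mu>)"

definition three_plans :: "'a::euclidean_space measure \<Rightarrow> 'a measure \<Rightarrow> 'a measure \<Rightarrow> ('a \<times> 'a \<times> 'a) measure set" where
  "three_plans \<sigma> \<mu>2 \<mu>3 = {P. prob_space P \<and> sets P = sets borel \<and>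
      distr P borel fst = \<sigma> \<and> distr P borel (\<lambda>p. fst (snd p)) = \<mu>2 \<and>
      distr P borel (\<lambda>p. snd (snd p)) = \<mu>3}"

definition gen_geodesic :: "('a::euclidean_space \<times> 'a \<times> 'a) measure \<Rightarrow> real \<Rightarrow> 'a measure" where
  "gen_geodesic P t = distr P borel (\<lambda>p. (1 - t) *\<^sub>R fst (snd p) + t *\<^sub>R snd (snd p))"

definition gen_geod_convex :: "real \<Rightarrow> ('a::euclidean_space measure \<Rightarrow> ereal) \<Rightarrow> bool" where
  "gen_geod_convex lam F \<longleftrightarrow>
    (\<forall>\<sigma> \<mu>2 \<mu>3. \<sigma> \<in> dom_F F \<and> \<mu>2 \<in> dom_F F \<and> \<mu>3 \<in> dom_F F \<longrightarrow>
      (\<exists>P\<in>three_plans \<sigma> \<mu>2 \<mu>3.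
         optimal_coupling \<sigma> \<mu>2 (distr P borel (\<lambda>p. (fst p, fst (snd p)))) \<and>
         optimal_coupling \<sigma> \<mu>3 (distr P borel (\<lambda>p. (fst p, snd (snd p)))) \<and>
         (\<forall>t\<in>{0..1}. F (gen_geodesic P t) \<le>
            ereal (1 - t) * F \<mu>2 + ereal t * F \<mu>3
            - ereal (lam / 2 * t * (1 - t) *
                     (\<integral>p. (norm (snd (snd p) - fst (snd p)))\<^sup>2 \<partial>P)))))"

definition slope :: "('a::euclidean_space measure \<Rightarrow> ereal) \<Rightarrow> 'a measure \<Rightarrow> ereal" where
  "slope F \<mu> = (if F \<mu> = \<infinity> then \<infinity> else
     (INF r\<in>{r::real. r > 0}. SUP \<nu>\<in>{\<nu>. P2 \<nu> \<and> 0 < W2 \<mu> \<nu> \<and> W2 \<mu> \<nu> < r}.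
         max 0 (F \<mu> - F \<nu>) / ereal (W2 \<mu> \<nu>)))"

definition standing_assumption ::
  "('a::euclidean_space measure \<Rightarrow> ereal) \<Rightarrow> real \<Rightarrow> 'a measure \<Rightarrow> bool" where
  "standing_assumption F lam \<mu>0 \<longleftrightarrow>
     proper_fun F \<and> narrow_lsc F \<and> coercive F \<and> gen_geod_convex lam F \<and> bounded_below F \<and>
     (\<forall>\<mu>. P2 \<mu> \<and> slope F \<mu> < \<infinity> \<longrightarrow> P2ac \<mu>) \<and>
     P2ac \<mu>0 \<and> slope F \<mu>0 < \<infinity>"

definition prox :: "real \<Rightarrow> ('a::euclidean_space measure \<Rightarrow> ereal) \<Rightarrow> 'a measure \<Rightarrow> 'a measure set" where
  "prox \<tau> F \<mu>h = {\<mu>. P2 \<mu> \<and> (\<forall>\<nu>. P2 \<nu> \<longrightarrow>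
      ereal ((W2 \<mu> \<mu>h)\<^sup>2 / 2) + ereal \<tau> * F \<mu> \<le> ereal ((W2 \<nu> \<mu>h)\<^sup>2 / 2) + ereal \<tau> * F \<nu>)}"

definition JKO_seq :: "real \<Rightarrow> ('a::euclidean_space measure \<Rightarrow> ereal) \<Rightarrow> 'a measure \<Rightarrow> (nat \<Rightarrow> 'a measure) \<Rightarrow> bool" where
  "JKO_seq \<tau> F \<mu>0 \<mu>s \<longleftrightarrow> \<mu>s 0 = \<mu>0 \<and> (\<forall>k. \<mu>s (Suc k) \<in> prox \<tau> F (\<mu>s k))"

definition step_idx :: "real \<Rightarrow> real \<Rightarrow> nat" where
  "step_idx \<tau> s = nat \<lfloor>s / \<tau>\<rfloor>"

definition step_frac :: "real \<Rightarrow> real \<Rightarrow> real" where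
  "step_frac \<tau> s = s / \<tau> - real (step_idx \<tau> s)"

definition disc_vel :: "real \<Rightarrow> (nat \<Rightarrow> 'a::euclidean_space \<Rightarrow> 'a) \<Rightarrow> nat \<Rightarrow> 'a \<Rightarrow> 'a" where
  "disc_vel \<tau> Ts k x = (Ts k x - x) /\<^sub>R \<tau>"

definition pc_curve :: "real \<Rightarrow> (nat \<Rightarrow> 'a::euclidean_space measure) \<Rightarrow> real \<Rightarrow> 'a measure" where
  "pc_curve \<tau> \<mu>s s = \<mu>s (step_idx \<tau> s)"

definition pc_vel :: "real \<Rightarrow> (nat \<Rightarrow> 'a::euclidean_space \<Rightarrow> 'a) \<Rightarrow> 'a \<Rightarrow> real \<Rightarrow> 'a" where
  "pc_vel \<tau> Ts x s = disc_vel \<tau> Ts (step_idx \<tau> s) x"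

definition interp_map :: "real \<Rightarrow> ('a::euclidean_space \<Rightarrow> 'a) \<Rightarrow> 'a \<Rightarrow> 'a" where
  "interp_map t T x = (1 - t) *\<^sub>R x + t *\<^sub>R T x"

definition geo_curve :: "real \<Rightarrow> (nat \<Rightarrow> 'a::euclidean_space measure) \<Rightarrow> (nat \<Rightarrow> 'a \<Rightarrow> 'a) \<Rightarrow> real \<Rightarrow> 'a measure" where
  "geo_curve \<tau> \<mu>s Ts s =
     distr (\<mu>s (step_idx \<tau> s)) borel (interp_map (step_frac \<tau> s) (Ts (step_idx \<tau> s)))"

coinductive smooth_fun :: "('b::euclidean_space \<Rightarrow> 'c::real_normed_vector) \<Rightarrow> bool" where
  "(\<forall>x. f differentiable (at x)) \<Longrightarrow>
   (\<forall>i\<in>Basis. smooth_fun (\<lambda>x. frechet_derivative f (at x) i)) \<Longrightarrow> smooth_fun f"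

text \<open>C_c^\<infinity>(R^d x [0,T]; R^d): restrictions of compactly supported smooth functions
  on R^d x R.\<close>
definition test_fun :: "('a::euclidean_space \<times> real \<Rightarrow> 'a) \<Rightarrow> bool" where
  "test_fun \<phi> \<longleftrightarrow> smooth_fun \<phi> \<and> compact (closure {z. \<phi> z \<noteq> 0})"

definition pairing :: "real \<Rightarrow> (real \<Rightarrow> 'a::euclidean_space measure) \<Rightarrow> ('a \<Rightarrow> real \<Rightarrow> 'a) \<Rightarrow> ('a \<times> real \<Rightarrow> 'a) \<Rightarrow> real" where
  "pairing T \<gamma> v \<phi> = (LINT t:{0..T}|lborel. (\<integral>x. inner (\<phi> (x, t)) (v x t) \<partial>(\<gamma> t)))"

definition L2_field :: "real \<Rightarrow> (real \<Rightarrow> 'a::euclidean_space measure) \<Rightarrow> ('a \<Rightarrow> real \<Rightarrow> 'a) \<Rightarrow> bool" where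
  "L2_field T \<gamma> v \<longleftrightarrow> (\<forall>t\<in>{0..T}. (\<lambda>x. v x t) \<in> borel_measurable (\<gamma> t)) \<and>
     (\<lambda>t. \<integral>\<^sup>+ x. ennreal ((norm (v x t))\<^sup>2) \<partial>(\<gamma> t)) \<in> borel_measurable borel \<and>
     (\<integral>\<^sup>+ t\<in>{0..T}. (\<integral>\<^sup>+ x. ennreal ((norm (v x t))\<^sup>2) \<partial>(\<gamma> t)) \<partial>lborel) < \<infinity>"

text \<open>Since v_\<tau>(\<cdot>,k\<tau>+t\<tau>) = v_\<tau>^k \<circ> ((1-t)Id+tT_\<tau>^k)^{-1} is only determined
  \<gamma>_\<tau>(t)-a.e., the inner integral over \<gamma>_\<tau>(t) = ((1-t)Id+tT)_# \<mu>_\<tau>^k is written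
  as the integral of the composed integrand against \<mu>_\<tau>^k.\<close>
definition geo_pairing :: "real \<Rightarrow> real \<Rightarrow> (nat \<Rightarrow> 'a::euclidean_space measure) \<Rightarrow> (nat \<Rightarrow> 'a \<Rightarrow> 'a) \<Rightarrow> ('a \<times> real \<Rightarrow> 'a) \<Rightarrow> real" where
  "geo_pairing T \<tau> \<mu>s Ts \<phi> = (LINT t:{0..T}|lborel.
     (\<integral>x. inner (\<phi> (interp_map (step_frac \<tau> t) (Ts (step_idx \<tau> t)) x, t))
                 (disc_vel \<tau> Ts (step_idx \<tau> t) x) \<partial>(\<mu>s (step_idx \<tau> t))))"

end

theory Submission
  imports Defs
begin

text \<open>On a time step \<open>[k\<tau>, (k+1)\<tau>)\<close> both interpolations pair the test field with the same
  discrete velocity \<open>v = (T\<^sub>k - id)/\<tau>\<close> integrated against the same iterate \<open>\<mu>\<^sub>k\<close>, after the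
  change of variables through the interpolating map; they differ only in whether \<open>\<phi>\<close> is
  evaluated at \<open>x\<close> or at the displaced point \<open>x + s\<tau> v(x)\<close>. As \<open>\<phi>\<close> is \<open>L\<close>-Lipschitz, the
  integrands differ by at most \<open>L\<tau>|v|\<^sup>2\<close>, whose integral is \<open>L W\<^sub>2(\<mu>\<^sub>k,\<mu>\<^sub>k\<^sub>+\<^sub>1)\<^sup>2/\<tau>\<close>. Integrating
  over \<open>[0,T]\<close> bounds the difference of the two pairings by \<open>L \<Sum>\<^sub>k W\<^sub>2(\<mu>\<^sub>k,\<mu>\<^sub>k\<^sub>+\<^sub>1)\<^sup>2\<close>, and the
  energy inequality of the JKO scheme bounds that sum by \<open>2\<tau>(F(\<mu>\<^sup>0) - inf F)\<close>. So the two
  pairings differ by \<open>O(\<tau>)\<close> and have the same limit.\<close>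

section \<open>Test functions\<close>

lemma bounded_if_vanishes_outside_compact:
  fixes f :: "'a::topological_space \<Rightarrow> 'b::real_normed_vector"
  assumes "continuous_on UNIV f" "compact K" "\<And>z. z \<notin> K \<Longrightarrow> f z = 0"
  shows "\<exists>M. \<forall>z. norm (f z) \<le> M"
proof -
  have "bounded (f ` K)"
    using assms(1,2) by (meson compact_continuous_image compact_imp_bounded continuous_on_subset top_greatest)
  then obtain M where "\<And>z. z \<in> K \<Longrightarrow> norm (f z) \<le> M"
    by (auto simp: bounded_iff)
  then have "norm (f z) \<le> max M 0" for z
    using assms(3) by (cases "z \<in> K") force+
  then show ?thesis by blast
qed

lemma lipschitz_if_partials_bounded:
  fixes f :: "'a::euclidean_space \<Rightarrow> 'b::real_normed_vector" and B :: real
  assumes deriv: "\<And>z. (f has_derivative f' z) (at z)"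
    and bound: "\<And>z i. i \<in> Basis \<Longrightarrow> norm (f' z i) \<le> B"
  shows "(DIM('a) * B)-lipschitz_on UNIV f"
proof (rule lipschitz_onI)
  have "0 \<le> B" using bound[OF SOME_Basis] norm_ge_zero order_trans by blast
  then show "0 \<le> DIM('a) * B" by simp
  have "onorm (f' z) \<le> DIM('a) * B" for z
  proof -
    have "onorm (f' z) \<le> (\<Sum>i\<in>Basis. norm (f' z i))"
      using deriv[of z] by (intro onorm_componentwise) (rule has_derivative_bounded_linear)
    also have "\<dots> \<le> (\<Sum>i\<in>(Basis::'a set). B)" by (intro sum_mono bound)
    finally show ?thesis by simp
  qed
  then have "norm (f x - f y) \<le> DIM('a) * B * norm (x - y)" for x y
    by (intro differentiable_bound[where S=UNIV]) (auto intro: deriv)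
  then show "dist (f x) (f y) \<le> DIM('a) * B * dist x y" for x y
    by (simp add: dist_norm)
qed

lemma smooth_fun_differentiable: "smooth_fun f \<Longrightarrow> f differentiable (at x)"
  by (erule smooth_fun.cases) simp

lemma smooth_fun_partial:
  "smooth_fun f \<Longrightarrow> i \<in> Basis \<Longrightarrow> smooth_fun (\<lambda>x. frechet_derivative f (at x) i)"
  by (erule smooth_fun.cases) simp

lemma smooth_fun_continuous: "smooth_fun f \<Longrightarrow> continuous_on UNIV f"
  by (intro continuous_at_imp_continuous_on ballI differentiable_imp_continuous_within
      smooth_fun_differentiable)

lemma test_fun_vanishes: "z \<notin> closure {z. \<phi> z \<noteq> 0} \<Longrightarrow> \<phi> z = 0"
  by (metis (mono_tags) closure_subset mem_Collect_eq subsetD)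

lemma test_fun_bounded:
  assumes "test_fun \<phi>" shows "\<exists>M. \<forall>z. norm (\<phi> z) \<le> M"
proof (rule bounded_if_vanishes_outside_compact)
  show "continuous_on UNIV \<phi>" "compact (closure {z. \<phi> z \<noteq> 0})"
    using assms smooth_fun_continuous unfolding test_fun_def by blast+
qed (rule test_fun_vanishes)

lemma test_fun_lipschitz: "test_fun \<phi> \<Longrightarrow> \<exists>L. L-lipschitz_on UNIV \<phi>"
proof -
  assume "test_fun \<phi>"
  then have smooth: "smooth_fun \<phi>" and K: "compact (closure {z. \<phi> z \<noteq> 0})" (is "compact ?K")
    unfolding test_fun_def by auto
  have partial_vanishes: "frechet_derivative \<phi> (at z) i = 0" if "z \<notin> ?K" for z i
  proof -
    have "(\<phi> has_derivative (\<lambda>_. 0)) (at z)"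
      by (rule has_derivative_transform_within_open[where f="\<lambda>_. 0" and s="- ?K"])
         (use that test_fun_vanishes in auto)
    then show ?thesis using frechet_derivative_at by metis
  qed
  have "\<exists>B. \<forall>z. norm (frechet_derivative \<phi> (at z) i) \<le> B" if "i \<in> Basis" for i
    using smooth_fun_continuous[OF smooth_fun_partial[OF smooth that]] K partial_vanishes
    by (rule bounded_if_vanishes_outside_compact)
  then obtain B where B: "\<And>i z. i \<in> Basis \<Longrightarrow> norm (frechet_derivative \<phi> (at z) i) \<le> B i"
    by metis
  have partials_bounded: "norm (frechet_derivative \<phi> (at z) i) \<le> (\<Sum>j\<in>Basis. B j)"
    if "i \<in> Basis" for z i
  proof -
    have "0 \<le> B j" if "j \<in> Basis" for j
      using B[OF that] norm_ge_zero order_trans by blast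
    then have "B i \<le> (\<Sum>j\<in>Basis. B j)"
      using that by (intro member_le_sum) auto
    then show ?thesis using B[OF that, of z] by linarith
  qed
  have "(\<phi> has_derivative frechet_derivative \<phi> (at z)) (at z)" for z
    using smooth_fun_differentiable[OF smooth] frechet_derivative_works by blast
  from lipschitz_if_partials_bounded[OF this partials_bounded] show ?thesis ..
qed

section \<open>Wasserstein distance\<close>

lemma measurable_fst_borel [measurable]:
  "fst \<in> borel_measurable (borel :: ('a::second_countable_topology \<times> 'b::second_countable_topology) measure)"
  by (metis borel_prod measurable_fst)

lemma measurable_snd_borel [measurable]:
  "snd \<in> borel_measurable (borel :: ('a::second_countable_topology \<times> 'b::second_countable_topology) measure)"
  by (metis borel_prod measurable_snd)

lemma W2sq_self:
  assumes "P2 \<mu>" shows "W2sq \<mu> \<mu> = 0"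
proof -
  have sets: "sets \<mu> = sets borel" and prob: "prob_space \<mu>"
    using assms unfolding P2_def by auto
  have diagonal: "(\<lambda>x. (x, x)) \<in> borel_measurable \<mu>"
    unfolding borel_prod[symmetric] by (intro measurable_Pair measurable_ident_sets[OF sets])
  let ?\<pi> = "distr \<mu> borel (\<lambda>x. (x, x))"
  have marginal: "distr ?\<pi> borel fst = \<mu>" "distr ?\<pi> borel snd = \<mu>"
    by (simp_all add: distr_distr[OF _ diagonal] comp_def distr_id2[OF sets[symmetric]])
  have "?\<pi> \<in> couplings \<mu> \<mu>"
    unfolding couplings_def using marginal prob_space.prob_space_distr[OF prob diagonal] by simp
  then have "W2sq \<mu> \<mu> \<le> transport_cost ?\<pi>"
    unfolding W2sq_def by (rule INF_lower)
  also have "transport_cost ?\<pi> = 0"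
    unfolding transport_cost_def by (simp add: nn_integral_distr diagonal)
  finally show ?thesis by simp
qed

lemma W2sq_commute_le: "W2sq \<nu> \<mu> \<le> W2sq \<mu> \<nu>"
  unfolding W2sq_def
proof (rule INF_greatest)
  fix \<pi> assume "\<pi> \<in> couplings \<mu> \<nu>"
  then have sets: "sets \<pi> = sets borel" and prob: "prob_space \<pi>"
    and fst: "distr \<pi> borel fst = \<mu>" and snd: "distr \<pi> borel snd = \<nu>"
    unfolding couplings_def by auto
  have swap: "(\<lambda>p. (snd p, fst p)) \<in> borel_measurable \<pi>"
    unfolding measurable_cong_sets[OF sets refl] borel_prod[symmetric] by measurable
  let ?\<sigma> = "distr \<pi> borel (\<lambda>p. (snd p, fst p))"
  have marginal: "distr ?\<sigma> borel fst = \<nu>" "distr ?\<sigma> borel snd = \<mu>"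
    by (simp_all add: distr_distr[OF _ swap] comp_def fst snd)
  have "?\<sigma> \<in> couplings \<nu> \<mu>"
    unfolding couplings_def using marginal prob_space.prob_space_distr[OF prob swap] by simp
  then have "(INF \<pi>\<in>couplings \<nu> \<mu>. transport_cost \<pi>) \<le> transport_cost ?\<sigma>"
    by (rule INF_lower)
  also have "transport_cost ?\<sigma> = transport_cost \<pi>"
    unfolding transport_cost_def by (simp add: nn_integral_distr swap dist_commute)
  finally show "(INF \<pi>\<in>couplings \<nu> \<mu>. transport_cost \<pi>) \<le> transport_cost \<pi>" .
qed

lemma W2sq_commute: "W2sq \<nu> \<mu> = W2sq \<mu> \<nu>"
  by (intro antisym W2sq_commute_le)

lemma W2_commute: "W2 \<nu> \<mu> = W2 \<mu> \<nu>"
  unfolding W2_def by (subst W2sq_commute) (rule refl)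

lemma W2_self: "P2 \<mu> \<Longrightarrow> W2 \<mu> \<mu> = 0"
  unfolding W2_def by (simp add: W2sq_self)

lemma transport_map_cost_finite:
  assumes "P2 \<mu>" "P2 \<nu>" and T: "T \<in> borel_measurable borel" "distr \<mu> borel T = \<nu>"
  shows "(\<integral>\<^sup>+ x. ennreal ((dist (T x) x)\<^sup>2) \<partial>\<mu>) < \<infinity>"
proof -
  have sets: "sets \<mu> = sets borel" using assms(1) unfolding P2_def by auto
  have T_meas: "T \<in> borel_measurable \<mu>"
    using T(1) measurable_cong_sets[OF sets refl] by blast
  have "ennreal ((dist (T x) x)\<^sup>2) \<le> 2 * ennreal ((norm (T x))\<^sup>2) + 2 * ennreal ((norm x)\<^sup>2)"
    for x
  proof -
    have "(dist (T x) x)\<^sup>2 \<le> (norm (T x) + norm x)\<^sup>2"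
      by (simp add: dist_norm norm_triangle_ineq4 power_mono)
    also have "\<dots> \<le> 2 * (norm (T x))\<^sup>2 + 2 * (norm x)\<^sup>2"
      using sum_squares_bound[of "norm (T x)" "norm x"] by (simp add: power2_sum)
    finally have "ennreal ((dist (T x) x)\<^sup>2) \<le> ennreal (2 * (norm (T x))\<^sup>2 + 2 * (norm x)\<^sup>2)"
      by (rule ennreal_leI)
    then show ?thesis by (simp add: ennreal_plus ennreal_mult)
  qed
  then have "(\<integral>\<^sup>+ x. ennreal ((dist (T x) x)\<^sup>2) \<partial>\<mu>)
      \<le> (\<integral>\<^sup>+ x. 2 * ennreal ((norm (T x))\<^sup>2) + 2 * ennreal ((norm x)\<^sup>2) \<partial>\<mu>)"
    by (rule nn_integral_mono)
  also have "\<dots> = 2 * (\<integral>\<^sup>+ x. ennreal ((norm (T x))\<^sup>2) \<partial>\<mu>) + 2 * (\<integral>\<^sup>+ x. ennreal ((norm x)\<^sup>2) \<partial>\<mu>)"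
    using T_meas by (simp add: nn_integral_add nn_integral_cmult measurable_cong_sets[OF sets refl])
  also have "(\<integral>\<^sup>+ x. ennreal ((norm (T x))\<^sup>2) \<partial>\<mu>) = (\<integral>\<^sup>+ y. ennreal ((norm y)\<^sup>2) \<partial>\<nu>)"
    unfolding T(2)[symmetric] using T_meas by (subst nn_integral_distr) auto
  also have "2 * (\<integral>\<^sup>+ y. ennreal ((norm y)\<^sup>2) \<partial>\<nu>) + 2 * (\<integral>\<^sup>+ x. ennreal ((norm x)\<^sup>2) \<partial>\<mu>) < \<infinity>"
    using assms(1,2) unfolding P2_def by (simp add: ennreal_mult_less_top)
  finally show ?thesis .
qed

lemma optimal_map_displacement:
  assumes "P2 \<mu>" "P2 \<nu>" "optimal_map \<mu> \<nu> T"
  shows "integrable \<mu> (\<lambda>x. (dist (T x) x)\<^sup>2)"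
    and "(\<integral>x. (dist (T x) x)\<^sup>2 \<partial>\<mu>) = (W2 \<mu> \<nu>)\<^sup>2"
proof -
  have sets: "sets \<mu> = sets borel" using assms(1) unfolding P2_def by auto
  have T: "T \<in> borel_measurable borel" "distr \<mu> borel T = \<nu>"
    and cost: "(\<integral>\<^sup>+ x. ennreal ((dist (T x) x)\<^sup>2) \<partial>\<mu>) = W2sq \<mu> \<nu>"
    using assms(3) unfolding optimal_map_def by auto
  have meas: "(\<lambda>x. (dist (T x) x)\<^sup>2) \<in> borel_measurable \<mu>"
    using T(1) unfolding measurable_cong_sets[OF sets refl] by measurable
  show "integrable \<mu> (\<lambda>x. (dist (T x) x)\<^sup>2)"
    using transport_map_cost_finite[OF assms(1,2) T] meas by (intro integrableI_nonneg) auto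
  have "(\<integral>x. (dist (T x) x)\<^sup>2 \<partial>\<mu>) = enn2real (W2sq \<mu> \<nu>)"
    using meas by (simp add: integral_eq_nn_integral cost)
  then show "(\<integral>x. (dist (T x) x)\<^sup>2 \<partial>\<mu>) = (W2 \<mu> \<nu>)\<^sup>2"
    unfolding W2_def by simp
qed

section \<open>JKO scheme and time steps\<close>

lemma prox_descent:
  assumes "\<mu>' \<in> prox \<tau> F \<mu>" "P2 \<mu>" "\<tau> > 0" "F \<mu> = ereal a" "ereal c \<le> F \<mu>'"
  shows "\<exists>b. F \<mu>' = ereal b \<and> (W2 \<mu>' \<mu>)\<^sup>2 / 2 + \<tau> * b \<le> \<tau> * a"
proof -
  have "ereal ((W2 \<mu>' \<mu>)\<^sup>2 / 2) + ereal \<tau> * F \<mu>' \<le> ereal ((W2 \<mu> \<mu>)\<^sup>2 / 2) + ereal \<tau> * F \<mu>"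
    using assms(1,2) unfolding prox_def by blast
  then have "ereal ((W2 \<mu>' \<mu>)\<^sup>2 / 2) + ereal \<tau> * F \<mu>' \<le> ereal (\<tau> * a)"
    using assms(2,4) by (simp add: W2_self)
  then show ?thesis
    using assms(3,5) by (cases "F \<mu>'") auto
qed

lemma JKO_seq_P2: "JKO_seq \<tau> F \<mu>0 \<mu>s \<Longrightarrow> P2 \<mu>0 \<Longrightarrow> P2 (\<mu>s k)"
  unfolding JKO_seq_def prox_def by (cases k) auto

lemma JKO_seq_energy:
  assumes jko: "JKO_seq \<tau> F \<mu>0 \<mu>s" and "\<tau> > 0" "P2 \<mu>0" "F \<mu>0 = ereal a"
    and below: "\<And>\<mu>. P2 \<mu> \<Longrightarrow> ereal c \<le> F \<mu>"
  shows "(\<Sum>k<n. (W2 (\<mu>s (Suc k)) (\<mu>s k))\<^sup>2) \<le> 2 * \<tau> * (a - c)"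
proof -
  have P2: "P2 (\<mu>s k)" for k using JKO_seq_P2 jko assms(3) by blast
  have step: "\<mu>s (Suc k) \<in> prox \<tau> F (\<mu>s k)" for k using jko unfolding JKO_seq_def by blast
  have "\<exists>f. F (\<mu>s n) = ereal f \<and> (\<Sum>k<n. (W2 (\<mu>s (Suc k)) (\<mu>s k))\<^sup>2) \<le> 2 * \<tau> * (a - f)"
  proof (induction n)
    case 0
    then show ?case using jko assms(4) unfolding JKO_seq_def by simp
  next
    case (Suc n)
    then obtain f where f: "F (\<mu>s n) = ereal f"
      and sum: "(\<Sum>k<n. (W2 (\<mu>s (Suc k)) (\<mu>s k))\<^sup>2) \<le> 2 * \<tau> * (a - f)" by blast
    obtain b where "F (\<mu>s (Suc n)) = ereal b" "(W2 (\<mu>s (Suc n)) (\<mu>s n))\<^sup>2 / 2 + \<tau> * b \<le> \<tau> * f"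
      using prox_descent[OF step P2 \<open>\<tau> > 0\<close> f below[OF P2]] by blast
    with sum show ?case by (intro exI[of _ b]) (simp add: algebra_simps)
  qed
  then obtain f where f: "F (\<mu>s n) = ereal f"
    and sum: "(\<Sum>k<n. (W2 (\<mu>s (Suc k)) (\<mu>s k))\<^sup>2) \<le> 2 * \<tau> * (a - f)"
    by blast
  note sum
  also have "\<dots> \<le> 2 * \<tau> * (a - c)"
    using below[OF P2[of n]] f \<open>\<tau> > 0\<close> by (intro mult_left_mono) auto
  finally show ?thesis .
qed

lemma step_idx_le:
  "\<tau> > 0 \<Longrightarrow> t \<le> T \<Longrightarrow> step_idx \<tau> t \<le> nat \<lfloor>T / \<tau>\<rfloor>"
  unfolding step_idx_def by (intro nat_mono floor_mono divide_right_mono) auto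

lemma step_idx_bounds:
  assumes "\<tau> > 0" "0 \<le> t"
  shows "real (step_idx \<tau> t) * \<tau> \<le> t" "t < real (Suc (step_idx \<tau> t)) * \<tau>"
    and "0 \<le> step_frac \<tau> t" "step_frac \<tau> t \<le> 1"
proof -
  have idx: "real (step_idx \<tau> t) = of_int \<lfloor>t / \<tau>\<rfloor>"
    unfolding step_idx_def using assms by simp
  have floor: "of_int \<lfloor>t / \<tau>\<rfloor> \<le> t / \<tau>" "t / \<tau> < of_int \<lfloor>t / \<tau>\<rfloor> + 1"
    by linarith+
  show "real (step_idx \<tau> t) * \<tau> \<le> t"
    using mult_right_mono[OF floor(1), of \<tau>] idx assms(1) by simp
  show "t < real (Suc (step_idx \<tau> t)) * \<tau>"
    using floor(2) idx assms(1) by (simp add: pos_divide_less_eq algebra_simps)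
  show "0 \<le> step_frac \<tau> t" "step_frac \<tau> t \<le> 1"
    unfolding step_frac_def idx using floor by linarith+
qed

lemma measurable_step_idx [measurable]: "step_idx \<tau> \<in> measurable borel (count_space UNIV)"
  unfolding step_idx_def by measurable

lemma set_integral_step_idx_bound:
  fixes h :: "real \<Rightarrow> real"
  assumes "\<tau> > 0" and c: "\<And>k. 0 \<le> c k" and h: "set_integrable lborel {0..T} h"
    and bound: "\<And>t. t \<in> {0..T} \<Longrightarrow> \<bar>h t\<bar> \<le> c (step_idx \<tau> t)"
  shows "\<bar>LINT t:{0..T}|lborel. h t\<bar> \<le> \<tau> * (\<Sum>k<Suc (nat \<lfloor>T / \<tau>\<rfloor>). c k)"
proof -
  define N where "N = Suc (nat \<lfloor>T / \<tau>\<rfloor>)"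
  define A where "A k = {real k * \<tau> ..< real (Suc k) * \<tau>}" for k
  have A_measure: "measure lborel (A k) = \<tau>" for k
    unfolding A_def using \<open>\<tau> > 0\<close> by (simp add: algebra_simps)
  have A_integrable: "integrable lborel (\<lambda>t. c k * indicator (A k) t)" for k
    unfolding A_def using \<open>\<tau> > 0\<close>
    by (intro integrable_mult_right integrable_real_indicator) (auto simp: emeasure_lborel_Ico)
  have pointwise: "\<bar>indicator {0..T} t * h t\<bar> \<le> (\<Sum>k<N. c k * indicator (A k) t)" for t
  proof (cases "t \<in> {0..T}")
    case True
    then have idx: "step_idx \<tau> t \<in> {..<N}" "t \<in> A (step_idx \<tau> t)"
      using step_idx_le[OF \<open>\<tau> > 0\<close>, of t T] step_idx_bounds(1,2)[OF \<open>\<tau> > 0\<close>, of t]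
      unfolding N_def A_def by auto
    have "\<bar>indicator {0..T} t * h t\<bar> \<le> c (step_idx \<tau> t)"
      using True bound[of t] by simp
    also have "\<dots> = c (step_idx \<tau> t) * indicator (A (step_idx \<tau> t)) t"
      using idx(2) by simp
    also have "\<dots> \<le> (\<Sum>k<N. c k * indicator (A k) t)"
      using idx(1) by (intro member_le_sum) (auto intro!: mult_nonneg_nonneg c)
    finally show ?thesis .
  qed (auto intro!: sum_nonneg mult_nonneg_nonneg c)
  have "\<bar>LINT t:{0..T}|lborel. h t\<bar> \<le> (\<integral>t. \<bar>indicator {0..T} t * h t\<bar> \<partial>lborel)"
    unfolding set_lebesgue_integral_def by (simp add: integral_abs_bound)
  also have "\<dots> \<le> (\<integral>t. (\<Sum>k<N. c k * indicator (A k) t) \<partial>lborel)"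
    using h A_integrable pointwise unfolding set_integrable_def
    by (intro integral_mono integrable_abs Bochner_Integration.integrable_sum) simp_all
  also have "\<dots> = \<tau> * (\<Sum>k<N. c k)"
    using A_integrable
    by (subst Bochner_Integration.integral_sum) (auto simp: A_measure sum_distrib_left mult.commute)
  finally show ?thesis unfolding N_def .
qed

section \<open>The two interpolations\<close>

locale JKO_interpolation =
  fixes \<tau> :: real and \<mu>s :: "nat \<Rightarrow> 'a::euclidean_space measure" and Ts :: "nat \<Rightarrow> 'a \<Rightarrow> 'a"
  assumes step_pos: "\<tau> > 0"
    and P2_iterates: "\<And>k. P2 (\<mu>s k)"
    and optimal_steps: "\<And>k. optimal_map (\<mu>s k) (\<mu>s (Suc k)) (Ts k)"
begin

lemma sets_iterates [measurable_cong]: "sets (\<mu>s k) = sets borel"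
  using P2_iterates unfolding P2_def by blast

lemma prob_space_iterates: "prob_space (\<mu>s k)"
  using P2_iterates unfolding P2_def by blast

lemma measurable_steps [measurable]: "Ts k \<in> borel_measurable borel"
  using optimal_steps unfolding optimal_map_def by blast

lemma measurable_disc_vel [measurable]: "disc_vel \<tau> Ts k \<in> borel_measurable borel"
  unfolding disc_vel_def by measurable

lemma norm_disc_vel_sq: "(norm (disc_vel \<tau> Ts k x))\<^sup>2 = (dist (Ts k x) x)\<^sup>2 / \<tau>\<^sup>2"
proof -
  have "norm (disc_vel \<tau> Ts k x) = dist (Ts k x) x / \<tau>"
    unfolding disc_vel_def dist_norm norm_scaleR using step_pos by (simp add: divide_inverse mult.commute)
  then show ?thesis by (simp add: power_divide)
qed

lemma integrable_disc_vel_sq: "integrable (\<mu>s k) (\<lambda>x. (norm (disc_vel \<tau> Ts k x))\<^sup>2)"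
  unfolding norm_disc_vel_sq
  using optimal_map_displacement(1)[OF P2_iterates P2_iterates optimal_steps] by simp

lemma integral_disc_vel_sq:
  "(\<integral>x. (norm (disc_vel \<tau> Ts k x))\<^sup>2 \<partial>\<mu>s k) = (W2 (\<mu>s (Suc k)) (\<mu>s k))\<^sup>2 / \<tau>\<^sup>2"
  unfolding norm_disc_vel_sq
  using optimal_map_displacement(2)[OF P2_iterates P2_iterates optimal_steps]
  by (simp add: W2_commute)

lemma integrable_norm_disc_vel: "integrable (\<mu>s k) (\<lambda>x. norm (disc_vel \<tau> Ts k x))"
proof -
  interpret prob_space "\<mu>s k" by (rule prob_space_iterates)
  show ?thesis
    by (rule square_integrable_imp_integrable[OF _ integrable_disc_vel_sq]) measurable
qed

end

locale JKO_test_pairing = JKO_interpolation \<tau> \<mu>s Ts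
  for \<tau> :: real and \<mu>s :: "nat \<Rightarrow> 'a::euclidean_space measure" and Ts +
  fixes \<phi> :: "'a \<times> real \<Rightarrow> 'a" and L M :: real
  assumes lipschitz: "L-lipschitz_on UNIV \<phi>"
    and bounded: "\<And>z. norm (\<phi> z) \<le> M"
begin

lemma measurable_test_field [measurable]: "\<phi> \<in> borel_measurable (borel \<Otimes>\<^sub>M borel)"
  unfolding borel_prod using lipschitz
  by (intro borel_measurable_continuous_onI lipschitz_on_continuous_on)

lemma test_bound_nonneg: "0 \<le> M"
  using bounded norm_ge_zero order_trans by blast

text \<open>The inner integral of both pairings on step \<open>k\<close> at time \<open>t\<close>, with \<open>s\<close> the relative time
  within the step: \<open>s = step_frac \<tau> t\<close> gives the geodesic interpolation, \<open>s = 0\<close> the piecewise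
  constant one.\<close>
definition step_pairing :: "nat \<Rightarrow> real \<Rightarrow> real \<Rightarrow> real" where
  "step_pairing k s t = (\<integral>x. inner (\<phi> (interp_map s (Ts k) x, t)) (disc_vel \<tau> Ts k x) \<partial>\<mu>s k)"

lemma step_integrand_bound:
  "\<bar>inner (\<phi> (z, t)) (disc_vel \<tau> Ts k x)\<bar> \<le> M * norm (disc_vel \<tau> Ts k x)"
proof -
  have "\<bar>inner (\<phi> (z, t)) (disc_vel \<tau> Ts k x)\<bar> \<le> norm (\<phi> (z, t)) * norm (disc_vel \<tau> Ts k x)"
    by (rule Cauchy_Schwarz_ineq2)
  also have "\<dots> \<le> M * norm (disc_vel \<tau> Ts k x)"
    by (intro mult_right_mono bounded norm_ge_zero)
  finally show ?thesis .
qed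

lemma integrable_step_integrand:
  "integrable (\<mu>s k) (\<lambda>x. inner (\<phi> (interp_map s (Ts k) x, t)) (disc_vel \<tau> Ts k x))"
proof (rule Bochner_Integration.integrable_bound)
  show "integrable (\<mu>s k) (\<lambda>x. M * norm (disc_vel \<tau> Ts k x))"
    using integrable_norm_disc_vel by simp
  show "(\<lambda>x. inner (\<phi> (interp_map s (Ts k) x, t)) (disc_vel \<tau> Ts k x)) \<in> borel_measurable (\<mu>s k)"
    unfolding interp_map_def by measurable
  show "AE x in \<mu>s k. norm (inner (\<phi> (interp_map s (Ts k) x, t)) (disc_vel \<tau> Ts k x))
      \<le> norm (M * norm (disc_vel \<tau> Ts k x))"
    using step_integrand_bound test_bound_nonneg by (intro AE_I2) simp
qed

lemma step_pairing_bound: "\<bar>step_pairing k s t\<bar> \<le> M * (\<integral>x. norm (disc_vel \<tau> Ts k x) \<partial>\<mu>s k)"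
proof -
  have "\<bar>step_pairing k s t\<bar>
      \<le> (\<integral>x. \<bar>inner (\<phi> (interp_map s (Ts k) x, t)) (disc_vel \<tau> Ts k x)\<bar> \<partial>\<mu>s k)"
    unfolding step_pairing_def by (rule integral_abs_bound)
  also have "\<dots> \<le> (\<integral>x. M * norm (disc_vel \<tau> Ts k x) \<partial>\<mu>s k)"
    using integrable_step_integrand integrable_norm_disc_vel step_integrand_bound
    by (intro integral_mono integrable_abs) simp_all
  finally show ?thesis by simp
qed

lemma step_pairing_interp_diff:
  assumes "0 \<le> s" "s \<le> 1"
  shows "\<bar>step_pairing k s t - step_pairing k 0 t\<bar> \<le> L * (W2 (\<mu>s (Suc k)) (\<mu>s k))\<^sup>2 / \<tau>"
proof -
  let ?v = "disc_vel \<tau> Ts k"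
  let ?d = "\<lambda>x. inner (\<phi> (interp_map s (Ts k) x, t) - \<phi> (x, t)) (?v x)"
  have interp_0: "interp_map 0 (Ts k) x = x" for x by (simp add: interp_map_def)
  have integrable_d: "integrable (\<mu>s k) ?d"
    using integrable_step_integrand[of k s t] integrable_step_integrand[of k 0 t]
    by (simp add: inner_diff_left interp_0)
  have diff: "step_pairing k s t - step_pairing k 0 t = (\<integral>x. ?d x \<partial>\<mu>s k)"
    unfolding step_pairing_def interp_0 inner_diff_left
    using integrable_step_integrand[of k s t] integrable_step_integrand[of k 0 t]
    by (simp add: interp_0)
  have pointwise: "\<bar>?d x\<bar> \<le> L * \<tau> * (norm (?v x))\<^sup>2" for x
  proof -
    have "Ts k x - x = \<tau> *\<^sub>R ?v x"
      using step_pos by (simp add: disc_vel_def)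
    then have "interp_map s (Ts k) x - x = (s * \<tau>) *\<^sub>R ?v x"
      by (simp add: interp_map_def algebra_simps)
    then have displacement: "norm (interp_map s (Ts k) x - x) = s * \<tau> * norm (?v x)"
      using assms step_pos by simp
    have "norm (\<phi> (interp_map s (Ts k) x, t) - \<phi> (x, t))
        \<le> L * norm ((interp_map s (Ts k) x, t) - (x, t))"
      by (rule lipschitz_on_normD[OF lipschitz]) auto
    also have "norm ((interp_map s (Ts k) x, t) - (x, t)) = norm (interp_map s (Ts k) x - x)"
      by (simp add: norm_Pair)
    finally have lip: "norm (\<phi> (interp_map s (Ts k) x, t) - \<phi> (x, t)) \<le> L * (s * \<tau> * norm (?v x))"
      unfolding displacement .
    have "\<bar>?d x\<bar> \<le> norm (\<phi> (interp_map s (Ts k) x, t) - \<phi> (x, t)) * norm (?v x)"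
      by (rule Cauchy_Schwarz_ineq2)
    also have "\<dots> \<le> L * (s * \<tau> * norm (?v x)) * norm (?v x)"
      using lip by (intro mult_right_mono) auto
    also have "\<dots> \<le> L * (1 * \<tau> * norm (?v x)) * norm (?v x)"
      using assms step_pos lipschitz_on_nonneg[OF lipschitz]
      by (intro mult_right_mono mult_left_mono) auto
    finally show ?thesis by (simp add: power2_eq_square mult.assoc)
  qed
  have "\<bar>step_pairing k s t - step_pairing k 0 t\<bar> \<le> (\<integral>x. L * \<tau> * (norm (?v x))\<^sup>2 \<partial>\<mu>s k)"
    unfolding diff using integrable_d integrable_disc_vel_sq pointwise
    by (intro order_trans[OF integral_abs_bound] integral_mono integrable_abs) simp_all
  also have "\<dots> = L * \<tau> * ((W2 (\<mu>s (Suc k)) (\<mu>s k))\<^sup>2 / \<tau>\<^sup>2)"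
    by (simp add: integral_disc_vel_sq)
  also have "\<dots> = L * (W2 (\<mu>s (Suc k)) (\<mu>s k))\<^sup>2 / \<tau>"
    using step_pos by (simp add: power2_eq_square)
  finally show ?thesis .
qed

lemma measurable_step_pairing:
  assumes [measurable]: "f \<in> borel_measurable borel"
  shows "(\<lambda>t. step_pairing k (f t) t) \<in> borel_measurable borel"
proof -
  interpret sigma_finite_measure "\<mu>s k"
    using prob_space_iterates by (simp add: prob_space_imp_sigma_finite)
  have "(\<lambda>(t, x). inner (\<phi> (interp_map (f t) (Ts k) x, t)) (disc_vel \<tau> Ts k x))
      \<in> borel_measurable (borel \<Otimes>\<^sub>M \<mu>s k)"
    unfolding interp_map_def by measurable
  then show ?thesis
    unfolding step_pairing_def by (rule borel_measurable_lebesgue_integral)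
qed

lemma measurable_step_pairing_indexed:
  assumes "\<And>k. f k \<in> borel_measurable borel"
  shows "(\<lambda>t. step_pairing (step_idx \<tau> t) (f (step_idx \<tau> t) t) t) \<in> borel_measurable borel"
  by (rule measurable_compose_countable'[where I=UNIV and f="\<lambda>k t. step_pairing k (f k t) t"])
    (simp_all add: measurable_step_pairing assms)

lemma set_integrable_step_pairing:
  assumes "(\<lambda>t. step_pairing (step_idx \<tau> t) (f t) t) \<in> borel_measurable borel"
  shows "set_integrable lborel {0..T} (\<lambda>t. step_pairing (step_idx \<tau> t) (f t) t)"
proof -
  define b where "b k = M * (\<integral>x. norm (disc_vel \<tau> Ts k x) \<partial>\<mu>s k)" for k
  define B where "B = (\<Sum>k<Suc (nat \<lfloor>T / \<tau>\<rfloor>). b k)"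
  have "\<bar>step_pairing (step_idx \<tau> t) (f t) t\<bar> \<le> B" if "t \<in> {0..T}" for t
  proof -
    have idx: "step_idx \<tau> t \<in> {..<Suc (nat \<lfloor>T / \<tau>\<rfloor>)}"
      using step_idx_le[OF step_pos, of t T] that by auto
    have "\<bar>step_pairing (step_idx \<tau> t) (f t) t\<bar> \<le> b (step_idx \<tau> t)"
      unfolding b_def by (rule step_pairing_bound)
    also have "\<dots> \<le> B"
      unfolding B_def
      by (rule member_le_sum[OF idx]) (simp_all add: b_def test_bound_nonneg integral_nonneg_AE)
    finally show ?thesis .
  qed
  then show ?thesis
    unfolding set_integrable_def using assms
    by (intro integrableI_bounded_set_indicator[where B=B]) (auto simp: emeasure_lborel_Icc_eq)
qed

lemma geo_pairing_eq:
  "geo_pairing T \<tau> \<mu>s Ts \<phi> = (LINT t:{0..T}|lborel. step_pairing (step_idx \<tau> t) (step_frac \<tau> t) t)"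
  unfolding geo_pairing_def step_pairing_def ..

lemma pc_pairing_eq:
  "pairing T (pc_curve \<tau> \<mu>s) (pc_vel \<tau> Ts) \<phi> = (LINT t:{0..T}|lborel. step_pairing (step_idx \<tau> t) 0 t)"
proof -
  have "interp_map 0 f = (\<lambda>x. x)" for f :: "'a \<Rightarrow> 'a"
    by (simp add: interp_map_def fun_eq_iff)
  then show ?thesis
    unfolding pairing_def step_pairing_def pc_curve_def pc_vel_def by simp
qed

lemma geo_pairing_pc_pairing_diff:
  "\<bar>geo_pairing T \<tau> \<mu>s Ts \<phi> - pairing T (pc_curve \<tau> \<mu>s) (pc_vel \<tau> Ts) \<phi>\<bar>
    \<le> L * (\<Sum>k<Suc (nat \<lfloor>T / \<tau>\<rfloor>). (W2 (\<mu>s (Suc k)) (\<mu>s k))\<^sup>2)"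
proof -
  let ?G = "\<lambda>t. step_pairing (step_idx \<tau> t) (step_frac \<tau> t) t"
  let ?P = "\<lambda>t. step_pairing (step_idx \<tau> t) 0 t"
  have "?G \<in> borel_measurable borel"
    using measurable_step_pairing_indexed[of "\<lambda>k t. t / \<tau> - real k"] by (simp add: step_frac_def)
  moreover have "?P \<in> borel_measurable borel"
    using measurable_step_pairing_indexed[of "\<lambda>k t. 0"] by simp
  ultimately have G: "set_integrable lborel {0..T} ?G" and P: "set_integrable lborel {0..T} ?P"
    by (simp_all only: set_integrable_step_pairing)
  have "\<bar>geo_pairing T \<tau> \<mu>s Ts \<phi> - pairing T (pc_curve \<tau> \<mu>s) (pc_vel \<tau> Ts) \<phi>\<bar>
      = \<bar>LINT t:{0..T}|lborel. ?G t - ?P t\<bar>"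
    unfolding geo_pairing_eq pc_pairing_eq using set_integral_diff(2)[OF G P] by simp
  also have "\<dots> \<le> \<tau> * (\<Sum>k<Suc (nat \<lfloor>T / \<tau>\<rfloor>). L * (W2 (\<mu>s (Suc k)) (\<mu>s k))\<^sup>2 / \<tau>)"
  proof (rule set_integral_step_idx_bound[OF step_pos])
    show "0 \<le> L * (W2 (\<mu>s (Suc k)) (\<mu>s k))\<^sup>2 / \<tau>" for k
      using step_pos lipschitz_on_nonneg[OF lipschitz] by simp
    show "set_integrable lborel {0..T} (\<lambda>t. ?G t - ?P t)"
      by (rule set_integral_diff(1)[OF G P])
    show "\<bar>?G t - ?P t\<bar> \<le> L * (W2 (\<mu>s (Suc (step_idx \<tau> t))) (\<mu>s (step_idx \<tau> t)))\<^sup>2 / \<tau>"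
      if "t \<in> {0..T}" for t
      using that step_idx_bounds(3,4)[OF step_pos, of t] by (intro step_pairing_interp_diff) auto
  qed
  also have "\<dots> = L * (\<Sum>k<Suc (nat \<lfloor>T / \<tau>\<rfloor>). (W2 (\<mu>s (Suc k)) (\<mu>s k))\<^sup>2)"
    using step_pos by (simp add: sum_distrib_left del: sum.lessThan_Suc)
  finally show ?thesis .
qed

end

lemma standing_assumption_initial:
  assumes "standing_assumption F lam \<mu>0"
  obtains a c where "P2 \<mu>0" "F \<mu>0 = ereal a" "\<And>\<mu>. P2 \<mu> \<Longrightarrow> ereal c \<le> F \<mu>"
proof -
  obtain c where below: "\<And>\<mu>. P2 \<mu> \<Longrightarrow> ereal c \<le> F \<mu>"
    using assms unfolding standing_assumption_def bounded_below_def by blast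
  have P2: "P2 \<mu>0" and "F \<mu>0 \<noteq> \<infinity>"
    using assms unfolding standing_assumption_def P2ac_def slope_def by (auto split: if_splits)
  moreover have "F \<mu>0 \<noteq> -\<infinity>" using below[OF P2] by auto
  ultimately obtain a where "F \<mu>0 = ereal a" by (cases "F \<mu>0") auto
  from that[OF P2 this below] show ?thesis .
qed

lemma JKO_geo_pairing_pc_pairing_diff:
  assumes jko: "JKO_seq \<tau> F \<mu>0 \<mu>s" and "\<tau> > 0" "P2 \<mu>0" "F \<mu>0 = ereal a"
    and below: "\<And>\<mu>. P2 \<mu> \<Longrightarrow> ereal c \<le> F \<mu>"
    and optimal: "\<And>k. optimal_map (\<mu>s k) (\<mu>s (Suc k)) (Ts k)"
    and lipschitz: "L-lipschitz_on UNIV \<phi>" and bounded: "\<And>z. norm (\<phi> z) \<le> M"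
  shows "\<bar>geo_pairing T \<tau> \<mu>s Ts \<phi> - pairing T (pc_curve \<tau> \<mu>s) (pc_vel \<tau> Ts) \<phi>\<bar>
    \<le> 2 * L * (a - c) * \<tau>"
proof -
  have "P2 (\<mu>s k)" for k by (rule JKO_seq_P2[OF jko \<open>P2 \<mu>0\<close>])
  then interpret JKO_test_pairing \<tau> \<mu>s Ts \<phi> L M
    by unfold_locales (rule assms | assumption)+
  have "\<bar>geo_pairing T \<tau> \<mu>s Ts \<phi> - pairing T (pc_curve \<tau> \<mu>s) (pc_vel \<tau> Ts) \<phi>\<bar>
      \<le> L * (\<Sum>k<Suc (nat \<lfloor>T / \<tau>\<rfloor>). (W2 (\<mu>s (Suc k)) (\<mu>s k))\<^sup>2)"
    by (rule geo_pairing_pc_pairing_diff)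
  also have "\<dots> \<le> L * (2 * \<tau> * (a - c))"
    using JKO_seq_energy[of \<tau> F \<mu>0 \<mu>s a c, OF assms(1-5)] lipschitz_on_nonneg[OF lipschitz]
    by (rule mult_left_mono)
  finally show ?thesis by (simp add: algebra_simps)
qed

theorem mainTheorem3:
  fixes F :: "'a::euclidean_space measure \<Rightarrow> ereal"
    and lam :: real and \<mu>0 :: "'a measure" and T :: real
    and \<tau> :: "nat \<Rightarrow> real"
    and \<mu> :: "nat \<Rightarrow> nat \<Rightarrow> 'a measure"
    and Tm :: "nat \<Rightarrow> nat \<Rightarrow> 'a \<Rightarrow> 'a"
    and \<gamma>h :: "real \<Rightarrow> 'a measure"
    and vh :: "'a \<Rightarrow> real \<Rightarrow> 'a"
  assumes "standing_assumption F lam \<mu>0"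
    and "T > 0"
    and "\<forall>l. \<tau> l > 0" and "\<tau> \<longlonglongrightarrow> 0"
    and "\<forall>l. JKO_seq (\<tau> l) F \<mu>0 (\<mu> l)"
    and "\<forall>l k. optimal_map (\<mu> l k) (\<mu> l (Suc k)) (Tm l k)"
    and "\<forall>t\<in>{0..T}. P2 (\<gamma>h t)"
    and "L2_field T \<gamma>h vh"
    and "\<forall>l. L2_field T (pc_curve (\<tau> l) (\<mu> l)) (pc_vel (\<tau> l) (Tm l))"
    and "\<forall>\<phi>. test_fun \<phi> \<longrightarrow>
           (\<lambda>l. pairing T (pc_curve (\<tau> l) (\<mu> l)) (pc_vel (\<tau> l) (Tm l)) \<phi>)
             \<longlonglongrightarrow> pairing T \<gamma>h vh \<phi>"
  shows "\<forall>\<phi>. test_fun \<phi> \<longrightarrow>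
           (\<lambda>l. geo_pairing T (\<tau> l) (\<mu> l) (Tm l) \<phi>) \<longlonglongrightarrow> pairing T \<gamma>h vh \<phi>"
proof (intro allI impI)
  fix \<phi> :: "'a \<times> real \<Rightarrow> 'a"
  assume "test_fun \<phi>"
  obtain L where lipschitz: "L-lipschitz_on UNIV \<phi>"
    using test_fun_lipschitz[OF \<open>test_fun \<phi>\<close>] by blast
  obtain M where bounded: "\<And>z. norm (\<phi> z) \<le> M"
    using test_fun_bounded[OF \<open>test_fun \<phi>\<close>] by blast
  obtain a c where initial: "P2 \<mu>0" "F \<mu>0 = ereal a" and below: "\<And>\<mu>. P2 \<mu> \<Longrightarrow> ereal c \<le> F \<mu>"
    using standing_assumption_initial[OF assms(1)] by blast
  let ?geo = "\<lambda>l. geo_pairing T (\<tau> l) (\<mu> l) (Tm l) \<phi>"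
  let ?pc = "\<lambda>l. pairing T (pc_curve (\<tau> l) (\<mu> l)) (pc_vel (\<tau> l) (Tm l)) \<phi>"
  have "\<forall>l. norm (?geo l - ?pc l) \<le> 2 * L * (a - c) * \<tau> l"
    using JKO_geo_pairing_pc_pairing_diff[of _ F \<mu>0, OF _ _ initial below _ lipschitz bounded]
      assms(3,5,6) by simp
  moreover have "(\<lambda>l. 2 * L * (a - c) * \<tau> l) \<longlonglongrightarrow> 0"
    using tendsto_mult_right_zero[OF assms(4)] by simp
  ultimately have "(\<lambda>l. ?geo l - ?pc l) \<longlonglongrightarrow> 0"
    by (rule Lim_null_comparison[OF always_eventually])
  with assms(10) \<open>test_fun \<phi>\<close>
  have "(\<lambda>l. ?pc l + (?geo l - ?pc l)) \<longlonglongrightarrow> pairing T \<gamma>h vh \<phi> + 0"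
    by (intro tendsto_add) simp_all
  then show "?geo \<longlonglongrightarrow> pairing T \<gamma>h vh \<phi>" by simp
qed

end
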